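(* Let $G=(V,E,w)$ be a graph with $V\ne\emptyset$, positive integer vertex weights and maximum degree $\Delta\ge1$. Let $1\le\alpha\le\Delta$ and $\gamma=\lceil\sqrt{2\Delta\alpha}\,\rceil$, assume $\gamma\le\Delta$, and suppose $G$ is a $\gamma$-stable instance of \texttt{MIS} with maximum weight independent set $I^*$. Let $I$ be an independent set with $w(I)\ge w(I^* )/\alpha$, and let $S=\texttt{PURIFY}(G,I,\gamma)$. If $I\ne I^*$, then (1) $S\ne\emptyset$ and (2) $S\subseteq I^*$.
   Context: \texttt{MIS}: given a graph $G=(V,E)$ with weights $w:V\to\mathbb{R}_{>0}$, find an independent set maximizing $w(I)=\sum_{u\in I}w_u$; $w(X)=\sum_{u\in X}w_u$. For $\gamma\ge1$, a $\gamma$-perturbation of $w$ is any $w'$ with $w_u\le w'_u\le\gamma w_u$ for all $u$. The instance is $\gamma$-stable if it has a unique maximum weight independent set $I^*$ and $I^*$ remains the unique maximum weight independent set under every $\gamma$-perturbation of $w$. The procedure $\texttt{PURIFY}(G,I,\gamma)$ (for integer weights, integer $\gamma\ge1$ and independent set $I$): build an unweighted bipartite graph $G_0=(L\cup R,E_0)$ where $L$ contains $\gamma\cdot w(u)$ copies of each $u\in I$ and $R$ contains $w(v)$ copies of each $v\in V\setminus I$; for every edge $(u,v)\in E$ with $u\in I$, $v\notin I$, join every copy of $u$ in $L$ to every copy of $v$ in $R$. Compute a maximum cardinality matching $M$ of $G_0$ and return the set of all $u\in I$ having at least one copy in $L$ unmatched by $M$. *)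

theory Defs
  imports Complex_Main
begin

definition graph :: "'a set \<Rightarrow> ('a \<Rightarrow> 'a \<Rightarrow> bool) \<Rightarrow> bool" where
  "graph V E \<longleftrightarrow> finite V \<and> (\<forall>u v. E u v \<longrightarrow> u \<in> V \<and> v \<in> V)
     \<and> (\<forall>u v. E u v \<longrightarrow> E v u) \<and> (\<forall>u. \<not> E u u)"

definition degree :: "'a set \<Rightarrow> ('a \<Rightarrow> 'a \<Rightarrow> bool) \<Rightarrow> 'a \<Rightarrow> nat" where
  "degree V E v = card {u \<in> V. E v u}"

definition max_degree :: "'a set \<Rightarrow> ('a \<Rightarrow> 'a \<Rightarrow> bool) \<Rightarrow> nat" where
  "max_degree V E = Max (degree V E ` V)"

definition indep :: "'a set \<Rightarrow> ('a \<Rightarrow> 'a \<Rightarrow> bool) \<Rightarrow> 'a set \<Rightarrow> bool" where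
  "indep V E I \<longleftrightarrow> I \<subseteq> V \<and> (\<forall>u\<in>I. \<forall>v\<in>I. \<not> E u v)"

definition wsum :: "('a \<Rightarrow> real) \<Rightarrow> 'a set \<Rightarrow> real" where
  "wsum w X = (\<Sum>u\<in>X. w u)"

definition unique_mwis :: "'a set \<Rightarrow> ('a \<Rightarrow> 'a \<Rightarrow> bool) \<Rightarrow> ('a \<Rightarrow> real) \<Rightarrow> 'a set \<Rightarrow> bool" where
  "unique_mwis V E w I \<longleftrightarrow> indep V E I \<and>
     (\<forall>J. indep V E J \<and> J \<noteq> I \<longrightarrow> wsum w J < wsum w I)"

definition perturbation :: "'a set \<Rightarrow> real \<Rightarrow> ('a \<Rightarrow> real) \<Rightarrow> ('a \<Rightarrow> real) \<Rightarrow> bool" where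
  "perturbation V \<gamma> w w' \<longleftrightarrow> (\<forall>u\<in>V. w u \<le> w' u \<and> w' u \<le> \<gamma> * w u)"

definition stable_instance :: "'a set \<Rightarrow> ('a \<Rightarrow> 'a \<Rightarrow> bool) \<Rightarrow> ('a \<Rightarrow> real) \<Rightarrow> real \<Rightarrow> 'a set \<Rightarrow> bool" where
  "stable_instance V E w \<gamma> Istar \<longleftrightarrow> unique_mwis V E w Istar \<and>
     (\<forall>w'. perturbation V \<gamma> w w' \<longrightarrow> unique_mwis V E w' Istar)"

text \<open>The bipartite graph G0 of PURIFY: copies (u,i).\<close>
definition copiesL :: "'a set \<Rightarrow> nat \<Rightarrow> ('a \<Rightarrow> nat) \<Rightarrow> ('a \<times> nat) set" where
  "copiesL I \<gamma> w = {(u, i). u \<in> I \<and> i < \<gamma> * w u}"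

definition copiesR :: "'a set \<Rightarrow> 'a set \<Rightarrow> ('a \<Rightarrow> nat) \<Rightarrow> ('a \<times> nat) set" where
  "copiesR V I w = {(v, j). v \<in> V - I \<and> j < w v}"

definition G0_matching :: "'a set \<Rightarrow> ('a \<Rightarrow> 'a \<Rightarrow> bool) \<Rightarrow> ('a \<Rightarrow> nat) \<Rightarrow> 'a set \<Rightarrow> nat
    \<Rightarrow> (('a \<times> nat) \<times> ('a \<times> nat)) set \<Rightarrow> bool" where
  "G0_matching V E w I \<gamma> M \<longleftrightarrow> M \<subseteq> copiesL I \<gamma> w \<times> copiesR V I w
     \<and> (\<forall>(x, y)\<in>M. E (fst x) (fst y))
     \<and> (\<forall>(x, y)\<in>M. \<forall>(x', y')\<in>M. x = x' \<longleftrightarrow> y = y')"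

definition G0_max_matching :: "'a set \<Rightarrow> ('a \<Rightarrow> 'a \<Rightarrow> bool) \<Rightarrow> ('a \<Rightarrow> nat) \<Rightarrow> 'a set \<Rightarrow> nat
    \<Rightarrow> (('a \<times> nat) \<times> ('a \<times> nat)) set \<Rightarrow> bool" where
  "G0_max_matching V E w I \<gamma> M \<longleftrightarrow> G0_matching V E w I \<gamma> M
     \<and> (\<forall>M'. G0_matching V E w I \<gamma> M' \<longrightarrow> card M' \<le> card M)"

definition purify_out :: "'a set \<Rightarrow> nat \<Rightarrow> ('a \<Rightarrow> nat) \<Rightarrow> (('a \<times> nat) \<times> ('a \<times> nat)) set \<Rightarrow> 'a set" where
  "purify_out I \<gamma> w M = {u \<in> I. \<exists>i < \<gamma> * w u. (u, i) \<notin> fst ` M}"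

end

theory Submission
  imports Defs
begin

text \<open>
  Perturbing the weights of J - I* by the factor \<gamma> shows, by stability, that
  \<gamma> w(J - I*) < w(I* - J) for every independent J \<noteq> I*. Applied to J = (I* - N(C)) \<union> C, it
  bounds \<gamma> w(C) by the weight of the neighbourhood of C in I*, for every nonempty independent C
  disjoint from I*.

  For C \<subseteq> I - I* this is exactly Hall's condition for the copies of I - I* in the PURIFY graph
  against the copies of I* - I. A maximum matching therefore covers every copy of a vertex of
  I - I*, since otherwise rematching these copies along a Hall matching would enlarge it; so the
  output lies in I*. If the output were empty, all left copies would be matched and
  \<gamma> w(I) \<le> w(V - I) \<le> w(I*) + w(V - I*). Taking C = {v} for v \<notin> I* and double counting with the
  degree bound gives \<gamma> w(V - I*) < \<Delta> w(I*), whence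
  \<gamma>^2 w(I) < (\<gamma> + \<Delta>) w(I*) \<le> 2 \<Delta> \<alpha> w(I) \<le> \<gamma>^2 w(I).
\<close>

lemma copies_eq_Sigma: "{(u, i). u \<in> A \<and> i < f u} = Sigma A (\<lambda>u. {..<f u})"
  by auto

lemma finite_copiesL: "finite I \<Longrightarrow> finite (copiesL I \<gamma> w)"
  unfolding copiesL_def copies_eq_Sigma by auto

lemma card_copiesL: "finite I \<Longrightarrow> card (copiesL I \<gamma> w) = (\<Sum>u\<in>I. \<gamma> * w u)"
  unfolding copiesL_def copies_eq_Sigma by simp

lemma finite_copiesR: "finite V \<Longrightarrow> finite (copiesR V I w)"
  unfolding copiesR_def copies_eq_Sigma by auto

lemma card_copiesR: "finite V \<Longrightarrow> card (copiesR V I w) = (\<Sum>u\<in>V - I. w u)"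
  unfolding copiesR_def copies_eq_Sigma by simp

lemma mem_copiesR: "y \<in> copiesR V I w \<longleftrightarrow> fst y \<in> V - I \<and> snd y < w (fst y)"
  by (cases y) (simp add: copiesR_def)

lemma copiesL_mono: "B \<subseteq> I \<Longrightarrow> copiesL B \<gamma> w \<subseteq> copiesL I \<gamma> w"
  unfolding copiesL_def by auto

lemma indep_subset: "indep V E I \<Longrightarrow> C \<subseteq> I \<Longrightarrow> indep V E C"
  unfolding indep_def by blast

lemma indep_singleton: "graph V E \<Longrightarrow> v \<in> V \<Longrightarrow> indep V E {v}"
  unfolding graph_def indep_def by blast

lemma indep_finite: "graph V E \<Longrightarrow> indep V E I \<Longrightarrow> finite I"
  unfolding graph_def indep_def using finite_subset by blast

lemma indep_exchange:
  assumes "graph V E" "indep V E Is" "indep V E C"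
  shows "indep V E ((Is - {v. \<exists>c\<in>C. E c v}) \<union> C)"
  using assms unfolding graph_def indep_def by blast

lemma card_neighbours_le_max_degree:
  assumes "graph V E" "X \<subseteq> V" "u \<in> V"
  shows "card {v \<in> X. E v u} \<le> max_degree V E"
proof -
  have "card {v \<in> X. E v u} \<le> card {v \<in> V. E u v}"
    using assms unfolding graph_def by (intro card_mono) auto
  also have "\<dots> \<le> max_degree V E"
    using assms unfolding graph_def max_degree_def degree_def by (intro Max_ge) auto
  finally show ?thesis .
qed

lemma sum_neighbour_weights_le:
  fixes w :: "'a \<Rightarrow> real"
  assumes "graph V E" "X \<subseteq> V" "Y \<subseteq> V" "\<forall>u\<in>Y. w u \<ge> 0"
  shows "(\<Sum>v\<in>X. wsum w {u \<in> Y. E v u}) \<le> max_degree V E * wsum w Y"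
proof -
  have fin: "finite X" "finite Y"
    using assms(1-3) unfolding graph_def by (auto intro: finite_subset)
  have "(\<Sum>v\<in>X. wsum w {u \<in> Y. E v u}) = (\<Sum>v\<in>X. \<Sum>u\<in>Y. if E v u then w u else 0)"
    unfolding wsum_def using fin by (simp add: sum.inter_filter)
  also have "\<dots> = (\<Sum>u\<in>Y. \<Sum>v\<in>X. if E v u then w u else 0)"
    by (rule sum.swap)
  also have "\<dots> = (\<Sum>u\<in>Y. card {v \<in> X. E v u} * w u)"
    using fin by (simp add: sum.inter_filter[symmetric])
  also have "\<dots> \<le> (\<Sum>u\<in>Y. max_degree V E * w u)"
    using assms card_neighbours_le_max_degree[OF assms(1,2)] by (intro sum_mono mult_right_mono) auto
  finally show ?thesis
    unfolding wsum_def by (simp add: sum_distrib_left)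
qed

section \<open>Hall's marriage theorem\<close>

definition hall_condition :: "'a set \<Rightarrow> ('a \<Rightarrow> 'b set) \<Rightarrow> bool" where
  "hall_condition A N \<longleftrightarrow> (\<forall>Z\<subseteq>A. card Z \<le> card (\<Union>(N ` Z)))"

definition has_sdr :: "'a set \<Rightarrow> ('a \<Rightarrow> 'b set) \<Rightarrow> bool" where
  "has_sdr A N \<longleftrightarrow> (\<exists>f. inj_on f A \<and> (\<forall>a\<in>A. f a \<in> N a))"

lemma hall_condition_subset: "hall_condition A N \<Longrightarrow> B \<subseteq> A \<Longrightarrow> hall_condition B N"
  unfolding hall_condition_def by blast

text \<open>With a surplus of neighbours for every nonempty proper subset, Hall's condition survives
  deleting a and one of its neighbours b.\<close>
lemma has_sdr_if_no_tight_subset: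
  fixes N :: "'a \<Rightarrow> 'b set"
  assumes IH: "\<And>B (N' :: 'a \<Rightarrow> 'b set).
      B \<subset> A \<Longrightarrow> \<forall>x\<in>B. finite (N' x) \<Longrightarrow> hall_condition B N' \<Longrightarrow> has_sdr B N'"
    and fin: "finite A" "\<forall>x\<in>A. finite (N x)" and hall: "hall_condition A N"
    and loose: "\<forall>Z\<subseteq>A. Z \<noteq> {} \<longrightarrow> Z \<noteq> A \<longrightarrow> card Z < card (\<Union>(N ` Z))"
    and a: "a \<in> A"
  shows "has_sdr A N"
proof -
  have "card {a} \<le> card (\<Union>(N ` {a}))"
    using hall a unfolding hall_condition_def by blast
  then obtain b where b: "b \<in> N a"
    by fastforce
  define N' where "N' x = N x - {b}" for x
  have "hall_condition (A - {a}) N'"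
    unfolding hall_condition_def
  proof (intro allI impI)
    fix Z assume Z: "Z \<subseteq> A - {a}"
    show "card Z \<le> card (\<Union>(N' ` Z))"
    proof (cases "Z = {}")
      case False
      then have "card Z < card (\<Union>(N ` Z))"
        using loose Z a by blast
      moreover have "finite (\<Union>(N ` Z))"
        using Z fin by (meson Diff_subset finite_UN_I finite_subset subsetD)
      moreover have "\<Union>(N' ` Z) = \<Union>(N ` Z) - {b}"
        unfolding N'_def by auto
      ultimately show ?thesis
        by (simp add: card_Diff_singleton_if less_diff_conv)
          linarith
    qed simp
  qed
  moreover have "\<forall>x\<in>A - {a}. finite (N' x)"
    using fin unfolding N'_def by auto
  ultimately obtain f where f: "inj_on f (A - {a})" "\<forall>x\<in>A - {a}. f x \<in> N' x"
    using IH[of "A - {a}" N'] a unfolding has_sdr_def by blast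
  have "inj_on (f(a := b)) (A - {a})"
    using f(1) by (rule inj_on_cong[THEN iffD1, rotated]) simp
  moreover have "b \<notin> (f(a := b)) ` (A - {a})"
    using f(2) unfolding N'_def by auto
  ultimately have "inj_on (f(a := b)) A"
    using inj_on_insert[of "f(a := b)" a "A - {a}"] insert_Diff[OF a] by simp
  moreover have "\<forall>x\<in>A. (f(a := b)) x \<in> N x"
    using f b unfolding N'_def by auto
  ultimately show ?thesis
    unfolding has_sdr_def by blast
qed

text \<open>A tight subset Z is matched onto its neighbourhood; the rest of A is matched into what
  remains, where Hall's condition persists because Z uses up exactly its neighbourhood.\<close>
lemma has_sdr_if_tight_subset:
  fixes N :: "'a \<Rightarrow> 'b set"
  assumes IH: "\<And>B (N' :: 'a \<Rightarrow> 'b set).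
      B \<subset> A \<Longrightarrow> \<forall>x\<in>B. finite (N' x) \<Longrightarrow> hall_condition B N' \<Longrightarrow> has_sdr B N'"
    and fin: "finite A" "\<forall>x\<in>A. finite (N x)" and hall: "hall_condition A N"
    and Z: "Z \<subseteq> A" "Z \<noteq> {}" "Z \<noteq> A" "card (\<Union>(N ` Z)) = card Z"
  shows "has_sdr A N"
proof -
  define U where "U = \<Union>(N ` Z)"
  define N' where "N' x = N x - U" for x
  have finZ: "finite Z"
    using Z(1) fin(1) by (rule finite_subset)
  then have finU: "finite U"
    using Z(1) fin(2) unfolding U_def by blast
  have "has_sdr Z N"
    using Z fin hall_condition_subset[OF hall Z(1)] by (intro IH) auto
  then obtain f1 where f1: "inj_on f1 Z" "\<forall>x\<in>Z. f1 x \<in> N x"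
    unfolding has_sdr_def by blast
  have "hall_condition (A - Z) N'"
    unfolding hall_condition_def
  proof (intro allI impI)
    fix Y assume Y: "Y \<subseteq> A - Z"
    have finY: "finite Y"
      using Y fin(1) finite_subset by blast
    have "Y \<union> Z \<subseteq> A"
      using Y Z(1) by blast
    then have "card (Y \<union> Z) \<le> card (\<Union>(N ` (Y \<union> Z)))"
      using hall unfolding hall_condition_def by blast
    moreover have "card (Y \<union> Z) = card Y + card Z"
      using Y by (intro card_Un_disjoint finY finZ) blast
    moreover have "\<Union>(N' ` Y) = \<Union>(N ` (Y \<union> Z)) - U" "U \<subseteq> \<Union>(N ` (Y \<union> Z))"
      unfolding N'_def U_def by auto
    ultimately show "card Y \<le> card (\<Union>(N' ` Y))"
      using Z(4) finU unfolding U_def by (simp add: card_Diff_subset)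
  qed
  then have "has_sdr (A - Z) N'"
    using Z fin unfolding N'_def by (intro IH) auto
  then obtain f2 where f2: "inj_on f2 (A - Z)" "\<forall>x\<in>A - Z. f2 x \<in> N' x"
    unfolding has_sdr_def by blast
  define f where "f x = (if x \<in> Z then f1 x else f2 x)" for x
  have "inj_on f Z" "inj_on f (A - Z)"
    using f1(1) f2(1) by (auto intro: inj_on_cong[THEN iffD1, rotated] simp: f_def)
  moreover have "f ` Z \<inter> f ` (A - Z) = {}"
    using f1(2) f2(2) unfolding f_def N'_def U_def by auto
  moreover have "Z - (A - Z) = Z" "A - Z - Z = A - Z" "Z \<union> (A - Z) = A"
    using Z(1) by auto
  ultimately have "inj_on f A"
    using inj_on_Un[of f Z "A - Z"] by argo
  moreover have "\<forall>x\<in>A. f x \<in> N x"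
    using f1(2) f2(2) unfolding f_def N'_def by auto
  ultimately show ?thesis
    unfolding has_sdr_def by blast
qed

theorem Hall_marriage:
  assumes "finite A" "\<forall>a\<in>A. finite (N a)" "hall_condition A N"
  shows "has_sdr A N"
  using assms
proof (induction A arbitrary: N rule: finite_psubset_induct)
  case (psubset A)
  show ?case
  proof (cases "\<exists>Z\<subseteq>A. Z \<noteq> {} \<and> Z \<noteq> A \<and> card (\<Union>(N ` Z)) = card Z")
    case True
    then obtain Z where "Z \<subseteq> A" "Z \<noteq> {}" "Z \<noteq> A" "card (\<Union>(N ` Z)) = card Z"
      by blast
    then show ?thesis
      using has_sdr_if_tight_subset[OF psubset.IH psubset.hyps(1) psubset.prems] by blast
  next
    case False
    then have loose: "\<forall>Z\<subseteq>A. Z \<noteq> {} \<longrightarrow> Z \<noteq> A \<longrightarrow> card Z < card (\<Union>(N ` Z))"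
      using psubset.prems(2) unfolding hall_condition_def by (metis order_le_imp_less_or_eq)
    show ?thesis
    proof (cases "A = {}")
      case False
      then obtain a where "a \<in> A"
        by blast
      then show ?thesis
        using has_sdr_if_no_tight_subset[OF psubset.IH psubset.hyps(1) psubset.prems loose] by blast
    qed (simp add: has_sdr_def)
  qed
qed

section \<open>Consequences of stability\<close>

lemma stable_exchange_gain:
  fixes w :: "'a \<Rightarrow> real"
  assumes "finite V" and stable: "stable_instance V E w \<gamma> Is" and "\<gamma> \<ge> 1"
    and "\<forall>u\<in>V. w u \<ge> 0" and J: "indep V E J" "J \<noteq> Is"
  shows "\<gamma> * wsum w (J - Is) < wsum w (Is - J)"
proof -
  define w' where "w' u = (if u \<in> J - Is then \<gamma> * w u else w u)" for u
  have "perturbation V \<gamma> w w'"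
    unfolding perturbation_def w'_def using assms(3,4)
    by (auto intro: mult_right_mono[of 1 \<gamma>, simplified])
  then have mwis: "unique_mwis V E w' Is"
    using stable unfolding stable_instance_def by blast
  then have "wsum w' J < wsum w' Is"
    using J unfolding unique_mwis_def by blast
  moreover have "finite J" "finite Is"
    using J(1) mwis \<open>finite V\<close> unfolding unique_mwis_def indep_def by (auto intro: finite_subset)
  then have "wsum w' J = (\<Sum>u\<in>J \<inter> Is. w' u) + (\<Sum>u\<in>J - Is. w' u)"
      and "wsum w' Is = (\<Sum>u\<in>Is \<inter> J. w' u) + (\<Sum>u\<in>Is - J. w' u)"
    unfolding wsum_def by (simp_all only: sum.Int_Diff)
  moreover have "(\<Sum>u\<in>J - Is. w' u) = \<gamma> * wsum w (J - Is)" "(\<Sum>u\<in>Is - J. w' u) = wsum w (Is - J)"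
    "(\<Sum>u\<in>Is \<inter> J. w' u) = (\<Sum>u\<in>J \<inter> Is. w' u)"
    unfolding w'_def wsum_def by (simp_all add: sum_distrib_left Int_commute)
  ultimately show ?thesis
    by linarith
qed

text \<open>Swap C into Is at the price of its neighbours there.\<close>
lemma stable_neighbourhood_gain:
  fixes w :: "'a \<Rightarrow> real"
  assumes "graph V E" "stable_instance V E w \<gamma> Is" "\<gamma> \<ge> 1" "\<forall>u\<in>V. w u \<ge> 0"
    and C: "indep V E C" "C \<inter> Is = {}" "C \<noteq> {}"
  shows "\<gamma> * wsum w C < wsum w {v \<in> Is. \<exists>c\<in>C. E c v}"
proof -
  define J where "J = (Is - {v. \<exists>c\<in>C. E c v}) \<union> C"
  have "indep V E Is"
    using assms(2) unfolding stable_instance_def unique_mwis_def by blast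
  then have "indep V E J"
    unfolding J_def using assms(1) C(1) by (intro indep_exchange)
  moreover have "J \<noteq> Is" "J - Is = C" "Is - J = {v \<in> Is. \<exists>c\<in>C. E c v}"
    using C(2,3) unfolding J_def by auto
  moreover have "finite V"
    using assms(1) unfolding graph_def by blast
  ultimately show ?thesis
    using stable_exchange_gain[OF _ assms(2-4)] by metis
qed

lemma unique_mwis_weight_pos:
  fixes w :: "'a \<Rightarrow> real"
  assumes "graph V E" "V \<noteq> {}" "\<forall>v\<in>V. w v > 0" "unique_mwis V E w Is"
  shows "wsum w Is > 0"
proof -
  obtain v where v: "v \<in> V"
    using assms(2) by blast
  have "wsum w {v} \<le> wsum w Is"
    using assms(4) indep_singleton[OF assms(1) v] unfolding unique_mwis_def
    by (cases "{v} = Is") (auto intro: less_imp_le)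
  moreover have "wsum w {v} > 0"
    using assms(3) v unfolding wsum_def by simp
  ultimately show ?thesis
    by linarith
qed

lemma stable_outside_weight_lt:
  fixes w :: "'a \<Rightarrow> real"
  assumes G: "graph V E" and stable: "stable_instance V E w \<gamma> Is" and "\<gamma> \<ge> 1"
    and "\<forall>u\<in>V. w u \<ge> 0" and "max_degree V E \<ge> 1" and "wsum w Is > 0"
  shows "\<gamma> * wsum w (V - Is) < max_degree V E * wsum w Is"
proof (cases "V - Is = {}")
  case True
  then show ?thesis
    using assms(5,6) unfolding True wsum_def by simp
next
  case False
  have "finite V" "Is \<subseteq> V"
    using G stable unfolding graph_def stable_instance_def unique_mwis_def indep_def by blast+
  have "\<gamma> * w v < wsum w {u \<in> Is. E v u}" if "v \<in> V - Is" for v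
    using stable_neighbourhood_gain[OF G stable \<open>\<gamma> \<ge> 1\<close> assms(4) indep_singleton[OF G]] that
    unfolding wsum_def by simp
  then have "\<gamma> * wsum w (V - Is) < (\<Sum>v\<in>V - Is. wsum w {u \<in> Is. E v u})"
    unfolding wsum_def sum_distrib_left using \<open>finite V\<close> False by (intro sum_strict_mono) auto
  also have "\<dots> \<le> max_degree V E * wsum w Is"
    using G \<open>Is \<subseteq> V\<close> assms(4) by (intro sum_neighbour_weights_le) auto
  finally show ?thesis .
qed

section \<open>Matchings of the PURIFY graph\<close>

lemma G0_matchingI:
  assumes "M \<subseteq> copiesL I \<gamma> w \<times> copiesR V I w"
    and "\<And>x y. (x, y) \<in> M \<Longrightarrow> E (fst x) (fst y)"
    and "\<And>x y x' y'. (x, y) \<in> M \<Longrightarrow> (x', y') \<in> M \<Longrightarrow> x = x' \<longleftrightarrow> y = y'"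
  shows "G0_matching V E w I \<gamma> M"
  unfolding G0_matching_def
proof (intro conjI)
  show "\<forall>(x, y)\<in>M. E (fst x) (fst y)"
    using assms(2) by blast
  show "\<forall>(x, y)\<in>M. \<forall>(x', y')\<in>M. (x = x') = (y = y')"
    using assms(3) by blast
qed (use assms(1) in blast)

lemma G0_matching_pair_iff:
  assumes "G0_matching V E w I \<gamma> M" "(x, y) \<in> M" "(x', y') \<in> M"
  shows "x = x' \<longleftrightarrow> y = y'"
  using assms unfolding G0_matching_def by fastforce

lemma G0_matching_edge:
  assumes "G0_matching V E w I \<gamma> M" "(x, y) \<in> M"
  shows "E (fst x) (fst y)"
  using assms unfolding G0_matching_def by fastforce

lemma G0_matching_subset:
  "G0_matching V E w I \<gamma> M \<Longrightarrow> M \<subseteq> copiesL I \<gamma> w \<times> copiesR V I w"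
  unfolding G0_matching_def by blast

lemma G0_matching_partner_notin:
  assumes "G0_matching V E w I \<gamma> M" "indep V E Is" "(x, y) \<in> M" "fst x \<in> Is"
  shows "fst y \<notin> Is"
  using G0_matching_edge[OF assms(1,3)] assms(2,4) unfolding indep_def by blast

lemma G0_matching_inj_fst: "G0_matching V E w I \<gamma> M \<Longrightarrow> inj_on fst M"
  by (rule inj_onI) (metis G0_matching_pair_iff prod.collapse)

lemma G0_matching_inj_snd: "G0_matching V E w I \<gamma> M \<Longrightarrow> inj_on snd M"
  by (rule inj_onI) (metis G0_matching_pair_iff prod.collapse)

lemma G0_matching_finite:
  assumes "G0_matching V E w I \<gamma> M" "finite V" "I \<subseteq> V"
  shows "finite M"
proof (rule finite_subset)
  show "M \<subseteq> copiesL I \<gamma> w \<times> copiesR V I w"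
    using assms(1) by (rule G0_matching_subset)
  have "finite I"
    using assms(2,3) by (rule finite_subset[rotated])
  then show "finite (copiesL I \<gamma> w \<times> copiesR V I w)"
    using assms(2) by (simp add: finite_copiesL finite_copiesR)
qed

lemma purify_out_empty_imp_weight_le:
  assumes M: "G0_matching V E w I \<gamma> M" and "finite V" "I \<subseteq> V"
    and "purify_out I \<gamma> w M = {}"
  shows "\<gamma> * (\<Sum>u\<in>I. w u) \<le> (\<Sum>u\<in>V - I. w u)"
proof -
  have finM: "finite M"
    using G0_matching_finite assms(1-3) .
  have "copiesL I \<gamma> w \<subseteq> fst ` M"
    using assms(4) unfolding purify_out_def copiesL_def by blast
  then have "card (copiesL I \<gamma> w) \<le> card (fst ` M)"
    using finM by (simp add: card_mono)
  also have "\<dots> = card (snd ` M)"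
    using G0_matching_inj_fst[OF M] G0_matching_inj_snd[OF M] by (simp add: card_image)
  also have "\<dots> \<le> card (copiesR V I w)"
    using G0_matching_subset[OF M] finite_copiesR[OF \<open>finite V\<close>] by (intro card_mono) auto
  finally have "card (copiesL I \<gamma> w) \<le> card (copiesR V I w)" .
  moreover have "finite I"
    using assms(2,3) by (rule finite_subset[rotated])
  ultimately show ?thesis
    using assms(2) by (simp add: card_copiesL card_copiesR sum_distrib_left)
qed

lemma G0_matching_rematch:
  assumes M: "G0_matching V E w I \<gamma> M" and "B \<subseteq> I"
    and f: "inj_on f (copiesL B \<gamma> w)"
      "\<And>x. x \<in> copiesL B \<gamma> w \<Longrightarrow> f x \<in> copiesR V I w \<and> E (fst x) (fst (f x))"
      "\<And>x. x \<in> copiesL B \<gamma> w \<Longrightarrow> f x \<notin> snd ` {p \<in> M. fst (fst p) \<notin> B}"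
  shows "G0_matching V E w I \<gamma> ({p \<in> M. fst (fst p) \<notin> B} \<union> (\<lambda>x. (x, f x)) ` copiesL B \<gamma> w)"
    (is "G0_matching V E w I \<gamma> (?Mr \<union> ?F)")
proof (rule G0_matchingI)
  have "?Mr \<subseteq> copiesL I \<gamma> w \<times> copiesR V I w"
    using G0_matching_subset[OF M] by blast
  moreover have "?F \<subseteq> copiesL I \<gamma> w \<times> copiesR V I w"
    using copiesL_mono[OF \<open>B \<subseteq> I\<close>] f(2) by auto
  ultimately show "?Mr \<union> ?F \<subseteq> copiesL I \<gamma> w \<times> copiesR V I w"
    by (rule Un_least)
  show "E (fst x) (fst y)" if "(x, y) \<in> ?Mr \<union> ?F" for x y
    using that G0_matching_edge[OF M, of x y] f(2)[of x] by auto
  have mixed: "x \<noteq> x' \<and> y \<noteq> y'" if "(x, y) \<in> ?F" "(x', y') \<in> ?Mr" for x y x' y'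
  proof -
    have x: "x \<in> copiesL B \<gamma> w" and y: "y = f x"
      using that(1) by auto
    have "y \<notin> snd ` ?Mr"
      unfolding y by (rule f(3)[OF x])
    moreover have "y' \<in> snd ` ?Mr"
      using image_eqI[OF _ that(2), of y' snd] by simp
    moreover have "fst x \<in> B" "fst x' \<notin> B"
      using x that(2) unfolding copiesL_def by auto
    ultimately show ?thesis
      by blast
  qed
  show "x = x' \<longleftrightarrow> y = y'" if "(x, y) \<in> ?Mr \<union> ?F" "(x', y') \<in> ?Mr \<union> ?F" for x y x' y'
  proof (cases "(x, y) \<in> ?Mr"; cases "(x', y') \<in> ?Mr")
    assume "(x, y) \<in> ?Mr" "(x', y') \<in> ?Mr"
    then show ?thesis
      using G0_matching_pair_iff[OF M, of x y x' y'] by simp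
  next
    assume "(x, y) \<in> ?Mr" "(x', y') \<notin> ?Mr"
    then show ?thesis
      using that(2) mixed[of x' y' x y] by auto
  next
    assume "(x, y) \<notin> ?Mr" "(x', y') \<in> ?Mr"
    then show ?thesis
      using that(1) mixed[of x y x' y'] by auto
  next
    assume "(x, y) \<notin> ?Mr" "(x', y') \<notin> ?Mr"
    then have "x \<in> copiesL B \<gamma> w" "y = f x" "x' \<in> copiesL B \<gamma> w" "y' = f x'"
      using that by auto
    then show ?thesis
      using inj_on_eq_iff[OF f(1)] by auto
  qed
qed

lemma card_G0_matching_rematch:
  assumes M: "G0_matching V E w I \<gamma> M" and "finite V" "I \<subseteq> V" "B \<subseteq> I"
    and x: "x \<in> copiesL B \<gamma> w" "x \<notin> fst ` M"
  shows "card M < card ({p \<in> M. fst (fst p) \<notin> B} \<union> (\<lambda>x. (x, f x)) ` copiesL B \<gamma> w)"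
    (is "_ < card (?Mr \<union> ?F)")
proof -
  define Mb where "Mb = {p \<in> M. fst (fst p) \<in> B}"
  have finM: "finite M"
    using G0_matching_finite assms(1-3) .
  have "finite B"
    using subset_trans[OF assms(4,3)] assms(2) by (rule finite_subset)
  then have finL: "finite (copiesL B \<gamma> w)"
    by (rule finite_copiesL)
  have "fst ` M \<subseteq> copiesL I \<gamma> w"
    using G0_matching_subset[OF M] by auto
  then have "fst ` Mb \<subseteq> copiesL B \<gamma> w - {x}"
    using x(2) unfolding Mb_def copiesL_def by auto
  then have "card (fst ` Mb) \<le> card (copiesL B \<gamma> w - {x})"
    using finL by (intro card_mono) auto
  also have "\<dots> < card (copiesL B \<gamma> w)"
    using finL x(1) by (rule card_Diff1_less)
  finally have "card (fst ` Mb) < card (copiesL B \<gamma> w)" .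
  moreover have "card (fst ` Mb) = card Mb"
    using inj_on_subset[OF G0_matching_inj_fst[OF M]] unfolding Mb_def by (simp add: card_image)
  moreover have "card M = card ?Mr + card Mb"
  proof -
    have "M = ?Mr \<union> Mb"
      unfolding Mb_def by auto
    then have "card M = card (?Mr \<union> Mb)"
      by (rule arg_cong)
    also have "\<dots> = card ?Mr + card Mb"
      using finM unfolding Mb_def by (intro card_Un_disjoint) auto
    finally show ?thesis .
  qed
  moreover have "card (?Mr \<union> ?F) = card ?Mr + card ?F"
  proof (rule card_Un_disjoint)
    show "?Mr \<inter> ?F = {}"
      unfolding copiesL_def by auto
  qed (use finM finL in auto)
  moreover have "card ?F = card (copiesL B \<gamma> w)"
    by (rule card_image) (simp add: inj_on_def)
  ultimately show ?thesis
    by linarith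
qed

lemma G0_max_matching_covers:
  assumes M: "G0_max_matching V E w I \<gamma> M" and "finite V" "I \<subseteq> V" "B \<subseteq> I"
    and f: "inj_on f (copiesL B \<gamma> w)"
      "\<And>x. x \<in> copiesL B \<gamma> w \<Longrightarrow> f x \<in> copiesR V I w \<and> E (fst x) (fst (f x))"
      "\<And>x. x \<in> copiesL B \<gamma> w \<Longrightarrow> f x \<notin> snd ` {p \<in> M. fst (fst p) \<notin> B}"
  shows "copiesL B \<gamma> w \<subseteq> fst ` M"
proof
  fix x assume x: "x \<in> copiesL B \<gamma> w"
  have Mm: "G0_matching V E w I \<gamma> M"
    using M unfolding G0_max_matching_def by blast
  show "x \<in> fst ` M"
  proof (rule ccontr)
    assume "x \<notin> fst ` M"
    then have "card M < card ({p \<in> M. fst (fst p) \<notin> B} \<union> (\<lambda>x. (x, f x)) ` copiesL B \<gamma> w)"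
      using card_G0_matching_rematch[OF Mm assms(2-4) x] by blast
    moreover have "G0_matching V E w I \<gamma> ({p \<in> M. fst (fst p) \<notin> B} \<union> (\<lambda>x. (x, f x)) ` copiesL B \<gamma> w)"
      using G0_matching_rematch[OF Mm \<open>B \<subseteq> I\<close> f] .
    ultimately show False
      using M unfolding G0_max_matching_def by (meson leD)
  qed
qed

section \<open>Correctness of PURIFY\<close>

lemma purify_hall_condition:
  fixes w :: "'a \<Rightarrow> nat"
  assumes G: "graph V E" and stable: "stable_instance V E (\<lambda>u. real (w u)) (real \<gamma>) Is"
    and "\<gamma> \<ge> 1" and I: "indep V E I"
  shows "hall_condition (copiesL (I - Is) \<gamma> w) (\<lambda>x. {y \<in> copiesR Is I w. E (fst x) (fst y)})"
  unfolding hall_condition_def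
proof (intro allI impI)
  fix Z assume Z: "Z \<subseteq> copiesL (I - Is) \<gamma> w"
  show "card Z \<le> card (\<Union>x\<in>Z. {y \<in> copiesR Is I w. E (fst x) (fst y)})"
  proof (cases "Z = {}")
    case False
    define C where "C = fst ` Z"
    define NC where "NC = {v \<in> Is. \<exists>c\<in>C. E c v}"
    have C: "C \<subseteq> I - Is" "C \<noteq> {}"
      using Z False unfolding C_def copiesL_def by auto
    have "indep V E Is"
      using stable unfolding stable_instance_def unique_mwis_def by blast
    then have "finite I" "finite Is"
      using G I by (auto intro: indep_finite)
    then have finC: "finite C" and finNC: "finite NC"
      using C(1) unfolding NC_def by (meson Diff_subset finite_subset subset_trans, simp)
    have "Z \<subseteq> copiesL C \<gamma> w"
      using Z unfolding C_def copiesL_def by force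
    then have "card Z \<le> card (copiesL C \<gamma> w)"
      using finC by (intro card_mono finite_copiesL)
    also have "\<dots> = \<gamma> * (\<Sum>u\<in>C. w u)"
      using finC by (simp add: card_copiesL sum_distrib_left)
    also have "\<dots> < (\<Sum>u\<in>NC. w u)"
    proof -
      have "real \<gamma> * wsum (\<lambda>u. real (w u)) C < wsum (\<lambda>u. real (w u)) NC"
        unfolding NC_def using C indep_subset[OF I] \<open>\<gamma> \<ge> 1\<close>
        by (intro stable_neighbourhood_gain[OF G stable]) auto
      then show ?thesis
        unfolding wsum_def by (simp flip: of_nat_sum of_nat_mult)
    qed
    also have "\<dots> = card (\<Union>x\<in>Z. {y \<in> copiesR Is I w. E (fst x) (fst y)})"
    proof -
      have "(\<Union>x\<in>Z. {y \<in> copiesR Is I w. E (fst x) (fst y)}) = copiesR NC I w"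
        unfolding NC_def C_def by (rule set_eqI) (auto simp: mem_copiesR)
      moreover have "NC - I = NC"
        using I C unfolding NC_def indep_def by blast
      ultimately show ?thesis
        using finNC by (simp add: card_copiesR)
    qed
    finally show ?thesis
      by (rule less_imp_le)
  qed simp
qed

lemma purify_out_subset_stable_mwis:
  fixes w :: "'a \<Rightarrow> nat"
  assumes G: "graph V E" and stable: "stable_instance V E (\<lambda>u. real (w u)) (real \<gamma>) Is"
    and "\<gamma> \<ge> 1" and I: "indep V E I" and M: "G0_max_matching V E w I \<gamma> M"
  shows "purify_out I \<gamma> w M \<subseteq> Is"
proof -
  have Mm: "G0_matching V E w I \<gamma> M"
    using M unfolding G0_max_matching_def by blast
  have "indep V E Is"
    using stable unfolding stable_instance_def unique_mwis_def by blast
  have "finite V"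
    using G unfolding graph_def by blast
  have "I \<subseteq> V" "Is \<subseteq> V"
    using I \<open>indep V E Is\<close> unfolding indep_def by blast+
  have "finite I" "finite Is"
    using G I \<open>indep V E Is\<close> by (auto intro: indep_finite)
  let ?N = "\<lambda>x. {y \<in> copiesR Is I w. E (fst x) (fst y)}"
  have "has_sdr (copiesL (I - Is) \<gamma> w) ?N"
  proof (rule Hall_marriage)
    show "finite (copiesL (I - Is) \<gamma> w)"
      using \<open>finite I\<close> by (simp add: finite_copiesL)
    show "\<forall>x\<in>copiesL (I - Is) \<gamma> w. finite (?N x)"
      using finite_copiesR[OF \<open>finite Is\<close>] by simp
  qed (rule purify_hall_condition[OF G stable \<open>\<gamma> \<ge> 1\<close> I])
  then obtain f where f: "inj_on f (copiesL (I - Is) \<gamma> w)" "\<forall>x\<in>copiesL (I - Is) \<gamma> w. f x \<in> ?N x"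
    unfolding has_sdr_def by blast
  have "copiesL (I - Is) \<gamma> w \<subseteq> fst ` M"
  proof (rule G0_max_matching_covers[OF M \<open>finite V\<close> \<open>I \<subseteq> V\<close> _ f(1)])
    show "f x \<in> copiesR V I w \<and> E (fst x) (fst (f x))" if "x \<in> copiesL (I - Is) \<gamma> w" for x
      using f(2) that \<open>Is \<subseteq> V\<close> unfolding mem_copiesR by auto
    show "f x \<notin> snd ` {p \<in> M. fst (fst p) \<notin> I - Is}" if "x \<in> copiesL (I - Is) \<gamma> w" for x
    proof
      assume "f x \<in> snd ` {p \<in> M. fst (fst p) \<notin> I - Is}"
      then obtain x' where x': "(x', f x) \<in> M" "fst x' \<notin> I - Is"
        by force
      then have "fst x' \<in> Is"
        using G0_matching_subset[OF Mm] unfolding copiesL_def by force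
      then have "fst (f x) \<notin> Is"
        using G0_matching_partner_notin[OF Mm \<open>indep V E Is\<close> x'(1)] by blast
      then show False
        using f(2) that unfolding mem_copiesR by auto
    qed
  qed blast
  then show ?thesis
    unfolding purify_out_def copiesL_def by fastforce
qed

lemma real_le_nat_ceiling_sqrt_squared:
  assumes "x \<ge> 0"
  shows "x \<le> real (nat \<lceil>sqrt x\<rceil>) ^ 2"
proof -
  have "sqrt x \<le> real (nat \<lceil>sqrt x\<rceil>)"
    by linarith
  then have "sqrt x ^ 2 \<le> real (nat \<lceil>sqrt x\<rceil>) ^ 2"
    by (rule power_mono) (simp add: assms)
  then show ?thesis
    using assms by simp
qed

lemma purify_weight_bounds_absurd:
  fixes A Q X \<gamma> d \<alpha> :: real
  assumes "\<gamma> * X \<le> A + Q" "\<gamma> * Q < d * A" "A \<le> \<alpha> * X" "A > 0"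
    and "2 * d * \<alpha> \<le> \<gamma> ^ 2" "\<gamma> \<le> d" "\<gamma> \<ge> 0" "X \<ge> 0"
  shows False
proof -
  have "\<gamma> ^ 2 * X \<le> \<gamma> * A + \<gamma> * Q"
    using mult_left_mono[OF assms(1) assms(7)] by (simp add: power2_eq_square algebra_simps)
  also have "\<dots> < (\<gamma> + d) * A"
    using assms(2) by (simp add: algebra_simps)
  also have "\<dots> \<le> 2 * d * A"
    using assms(4,6) by (simp add: mult_right_mono)
  also have "\<dots> \<le> 2 * d * (\<alpha> * X)"
    using assms(3,4,6,7) by (simp add: mult_left_mono)
  also have "\<dots> \<le> \<gamma> ^ 2 * X"
    using mult_right_mono[OF assms(5,8)] by simp
  finally show False
    by simp
qed

lemma purify_out_nonempty:
  fixes w :: "'a \<Rightarrow> nat" and \<alpha> :: real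
  assumes G: "graph V E" and "V \<noteq> {}" and "\<forall>v\<in>V. w v > 0"
    and stable: "stable_instance V E (\<lambda>u. real (w u)) (real \<gamma>) Is"
    and I: "indep V E I" and M: "G0_matching V E w I \<gamma> M"
    and "2 * real (max_degree V E) * \<alpha> \<le> real \<gamma> ^ 2" "\<gamma> \<le> max_degree V E" "\<gamma> \<ge> 1"
    and "\<alpha> \<ge> 1" "wsum (\<lambda>u. real (w u)) I \<ge> wsum (\<lambda>u. real (w u)) Is / \<alpha>"
  shows "purify_out I \<gamma> w M \<noteq> {}"
proof
  assume empty: "purify_out I \<gamma> w M = {}"
  let ?W = "wsum (\<lambda>u. real (w u))"
  have "finite V"
    using G unfolding graph_def by blast
  have mwis: "unique_mwis V E (\<lambda>u. real (w u)) Is"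
    using stable unfolding stable_instance_def by blast
  have "I \<subseteq> V" "Is \<subseteq> V"
    using I mwis unfolding unique_mwis_def indep_def by blast+
  have "real (\<gamma> * (\<Sum>u\<in>I. w u)) \<le> real (\<Sum>u\<in>V - I. w u)"
    using purify_out_empty_imp_weight_le[OF M \<open>finite V\<close> \<open>I \<subseteq> V\<close> empty] by (rule of_nat_mono)
  then have "\<gamma> * ?W I \<le> ?W (V - I)"
    unfolding wsum_def by (simp add: sum_distrib_left)
  also have "\<dots> \<le> ?W V"
    unfolding wsum_def using \<open>finite V\<close> by (intro sum_mono2) auto
  also have "\<dots> = ?W Is + ?W (V - Is)"
    unfolding wsum_def using \<open>finite V\<close> \<open>Is \<subseteq> V\<close> by (simp add: sum.subset_diff)
  finally have bound_I: "\<gamma> * ?W I \<le> ?W Is + ?W (V - Is)" .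
  have pos: "?W Is > 0"
    using unique_mwis_weight_pos[OF G \<open>V \<noteq> {}\<close> _ mwis] assms(3) by simp
  have bound_outside: "\<gamma> * ?W (V - Is) < max_degree V E * ?W Is"
    using stable_outside_weight_lt[OF G stable _ _ _ pos] assms(8,9) by simp
  have approx: "?W Is \<le> \<alpha> * ?W I"
    using assms(10,11) by (simp add: divide_le_eq mult.commute)
  have "?W I \<ge> 0"
    unfolding wsum_def by (simp add: sum_nonneg)
  moreover have "real \<gamma> \<le> real (max_degree V E)"
    using assms(8) by (rule of_nat_mono)
  ultimately show False
    using purify_weight_bounds_absurd[OF bound_I bound_outside approx pos assms(7)] by simp
qed

theorem mainTheorem7:
  fixes V :: "'a set" and E :: "'a \<Rightarrow> 'a \<Rightarrow> bool" and w :: "'a \<Rightarrow> nat"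
    and \<alpha> :: real and \<Delta> \<gamma> :: nat and Istar I :: "'a set"
    and M :: "(('a \<times> nat) \<times> ('a \<times> nat)) set"
  assumes "graph V E" and "V \<noteq> {}" and "\<forall>v\<in>V. w v > 0"
    and "\<Delta> = max_degree V E" and "\<Delta> \<ge> 1"
    and "1 \<le> \<alpha>" and "\<alpha> \<le> real \<Delta>"
    and "\<gamma> = nat \<lceil>sqrt (2 * real \<Delta> * \<alpha>)\<rceil>" and "\<gamma> \<le> \<Delta>"
    and "stable_instance V E (\<lambda>u. real (w u)) (real \<gamma>) Istar"
    and "indep V E I"
    and "wsum (\<lambda>u. real (w u)) I \<ge> wsum (\<lambda>u. real (w u)) Istar / \<alpha>"
    and "G0_max_matching V E w I \<gamma> M"
    and "I \<noteq> Istar"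
  shows "purify_out I \<gamma> w M \<noteq> {} \<and> purify_out I \<gamma> w M \<subseteq> Istar"
proof
  have "2 * real \<Delta> * \<alpha> \<le> real \<gamma> ^ 2"
    unfolding assms(8) using assms(5,6) by (intro real_le_nat_ceiling_sqrt_squared) simp
  moreover have "2 * real \<Delta> * \<alpha> > 0"
    using assms(5,6) by simp
  ultimately have "\<gamma> \<ge> 1"
    by (cases \<gamma>) auto
  have "G0_matching V E w I \<gamma> M"
    using assms(13) unfolding G0_max_matching_def by blast
  from purify_out_nonempty[OF assms(1-3,10,11) this _ _ \<open>\<gamma> \<ge> 1\<close> assms(6,12)]
  show "purify_out I \<gamma> w M \<noteq> {}"
    using \<open>2 * real \<Delta> * \<alpha> \<le> real \<gamma> ^ 2\<close> assms(4,9) by blast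
  show "purify_out I \<gamma> w M \<subseteq> Istar"
    using purify_out_subset_stable_mwis[OF assms(1,10) \<open>\<gamma> \<ge> 1\<close> assms(11,13)] .
qed

end
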